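(* Assume $V=L$. Let $\zeta,\eta\in\Xi$ with $\eta\subseteq\zeta$, let $X,Y\in\mathrm{IPS}_\zeta$ with $X\restriction\eta=Y\restriction\eta$, and let $i\in\zeta\setminus\eta$. Then there exist $k<\omega$ and sets $X',Y'\in\mathrm{IPS}_\zeta$ with $X'\subseteq X$, $Y'\subseteq Y$, $X'$ clopen in $X$, $Y'$ clopen in $Y$, such that $X'\restriction\eta=Y'\restriction\eta$, and either $x(i)(k)=0$ and $y(i)(k)=1$ for all $x\in X'$, $y\in Y'$, or $x(i)(k)=1$ and $y(i)(k)=0$ for all $x\in X'$, $y\in Y'$.
   Context: $T$ is the set of all nonempty finite sequences of countable ordinals, ordered by strict extension $\subset$. $\Xi$ is the set of all at most countable $\xi\subseteq T$ closed downward under $\subset$. $D=2^\omega$; $D^\xi$ is the product of $\xi$ copies of $D$ with the product topology. For $\eta\subseteq\xi$, $x\in D^\xi$: $x\restriction\eta$ is the restriction, and $X\restriction\eta=\{x\restriction\eta:x\in X\}$. For $\zeta\in\Xi$, $\mathrm{IPS}_\zeta$ is the set of all $X\subseteq D^\zeta$ for which there is a homeomorphism $H$ of $D^\zeta$ onto $X$ such that for all $x_0,x_1\in D^\zeta$ and all $\xi\in\Xi$, $\xi\subseteq\zeta$: $x_0\restriction\xi=x_1\restriction\xi\iff H(x_0)\restriction\xi=H(x_1)\restriction\xi$. *)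

theory Defs
  imports "HOL-Analysis.Analysis"
begin

text \<open>Countable ordinals are modelled by a type 'o of class wellorder which is
  isomorphic to omega_1 (uncountable, all proper initial segments countable);
  these hypotheses appear in the theorem.\<close>

definition T_set :: "'o list set" where
  "T_set = {s. s \<noteq> []}"

definition strict_ext :: "'o list \<Rightarrow> 'o list \<Rightarrow> bool" where
  "strict_ext s t \<longleftrightarrow> (\<exists>u. u \<noteq> [] \<and> t = s @ u)"

definition Xi :: "'o list set set" where
  "Xi = {\<xi>. countable \<xi> \<and> \<xi> \<subseteq> T_set \<and>
          (\<forall>t\<in>\<xi>. \<forall>s\<in>T_set. strict_ext s t \<longrightarrow> s \<in> \<xi>)}"

definition D_top :: "(nat \<Rightarrow> bool) topology" where
  "D_top = product_topology (\<lambda>_. discrete_topology (UNIV :: bool set)) (UNIV :: nat set)"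

definition Dpow :: "'o list set \<Rightarrow> ('o list \<Rightarrow> nat \<Rightarrow> bool) topology" where
  "Dpow \<xi> = product_topology (\<lambda>_. D_top) \<xi>"

definition restr :: "('o list \<Rightarrow> nat \<Rightarrow> bool) \<Rightarrow> 'o list set \<Rightarrow> ('o list \<Rightarrow> nat \<Rightarrow> bool)" where
  "restr x \<eta> = restrict x \<eta>"

definition restr_set :: "('o list \<Rightarrow> nat \<Rightarrow> bool) set \<Rightarrow> 'o list set \<Rightarrow> ('o list \<Rightarrow> nat \<Rightarrow> bool) set" where
  "restr_set X \<eta> = (\<lambda>x. restr x \<eta>) ` X"

definition IPS :: "'o list set \<Rightarrow> ('o list \<Rightarrow> nat \<Rightarrow> bool) set set" where
  "IPS \<zeta> = {X. X \<subseteq> topspace (Dpow \<zeta>) \<and>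
     (\<exists>H. homeomorphic_map (Dpow \<zeta>) (subtopology (Dpow \<zeta>) X) H \<and>
        (\<forall>x0\<in>topspace (Dpow \<zeta>). \<forall>x1\<in>topspace (Dpow \<zeta>). \<forall>\<xi>\<in>Xi. \<xi> \<subseteq> \<zeta> \<longrightarrow>
           (restr x0 \<xi> = restr x1 \<xi> \<longleftrightarrow> restr (H x0) \<xi> = restr (H x1) \<xi>)))}"

definition clopen_in :: "('o list \<Rightarrow> nat \<Rightarrow> bool) set \<Rightarrow> 'o list set \<Rightarrow> ('o list \<Rightarrow> nat \<Rightarrow> bool) set \<Rightarrow> bool" where
  "clopen_in A \<zeta> X \<longleftrightarrow> openin (subtopology (Dpow \<zeta>) X) A \<and> closedin (subtopology (Dpow \<zeta>) X) A"

end

theory Submission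
  imports Defs
begin

(* Write X = H_X ` D^zeta and Y = H_Y ` D^zeta with continuous maps that preserve and reflect
   agreement on every xi in Xi below zeta.  Grafting H_X, resp. H_Y, onto the identity outside
   eta gives two homeomorphisms of D^zeta onto the same set {z. z|eta in X|eta}; composing one
   with the inverse of the other re-parametrises Y by a map F that agrees with H_X on eta.
   Changing the i-th coordinate of an argument of F changes the i-th coordinate of its value,
   because eta together with the proper prefixes of i is in Xi, and so is that set plus i.  Hence
   some w with w|eta = u|eta has F(w)(i) different from H_X(u)(i), say at bit k.  By continuity
   these bits are constant on cylinders around u and w with a common finite support, and the
   images of the two cylinders are X' and Y': cylinders are images of D^zeta under coordinatewise
   maps, and u and w agree on eta. *)

lemma topspace_D_top: "topspace D_top = UNIV"
  by (simp add: D_top_def)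

lemma topspace_Dpow [simp]: "topspace (Dpow \<zeta>) = extensional \<zeta>"
  by (simp add: Dpow_def D_top_def PiE_def)

lemma compact_space_Dpow: "compact_space (Dpow \<zeta>)"
  by (simp add: Dpow_def D_top_def compact_space_product_topology compact_space_discrete_topology)

lemma Hausdorff_space_Dpow: "Hausdorff_space (Dpow \<zeta>)"
  by (simp add: Dpow_def D_top_def Hausdorff_space_product_topology)

lemma continuous_map_Dpow_bit:
  assumes "t \<in> \<zeta>"
  shows "continuous_map (Dpow \<zeta>) (discrete_topology UNIV) (\<lambda>x. x t m)"
proof -
  have "continuous_map (Dpow \<zeta>) D_top (\<lambda>x. x t)"
    unfolding Dpow_def using assms by (rule continuous_map_product_projection)
  moreover have "continuous_map D_top (discrete_topology UNIV) (\<lambda>f. f m)"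
    unfolding D_top_def by (rule continuous_map_product_projection) simp
  ultimately show ?thesis
    using continuous_map_compose[unfolded o_def] by blast
qed

lemma continuous_map_into_Dpow:
  assumes "\<And>x. x \<in> topspace Z \<Longrightarrow> F x \<in> extensional \<zeta>"
    and "\<And>t m. t \<in> \<zeta> \<Longrightarrow> continuous_map Z (discrete_topology UNIV) (\<lambda>x. F x t m)"
  shows "continuous_map Z (Dpow \<zeta>) F"
  using assms unfolding Dpow_def D_top_def continuous_map_componentwise continuous_map_componentwise_UNIV
  by fastforce

lemma homeomorphic_map_onto_image_Dpow:
  assumes "continuous_map (Dpow \<zeta>) (Dpow \<zeta>) f" "inj_on f (extensional \<zeta>)"
  shows "homeomorphic_map (Dpow \<zeta>) (subtopology (Dpow \<zeta>) (f ` extensional \<zeta>)) f"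
proof (rule continuous_imp_homeomorphic_map)
  have "f ` extensional \<zeta> \<subseteq> extensional \<zeta>"
    using continuous_map_image_subset_topspace[OF assms(1)] by simp
  then show "f ` topspace (Dpow \<zeta>) = topspace (subtopology (Dpow \<zeta>) (f ` extensional \<zeta>))"
    by auto
  show "continuous_map (Dpow \<zeta>) (subtopology (Dpow \<zeta>) (f ` extensional \<zeta>)) f"
    using assms(1) by (simp add: continuous_map_into_subtopology)
qed (use assms compact_space_Dpow Hausdorff_space_Dpow Hausdorff_space_subtopology in auto)

lemma restr_eq_iff: "restr x \<xi> = restr y \<xi> \<longleftrightarrow> (\<forall>t\<in>\<xi>. x t = y t)"
  by (auto simp: restr_def fun_eq_iff)

(* Continuity suffices: the case xi = zeta gives injectivity, and D^zeta is compact. *)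
definition ips_map :: "'o list set \<Rightarrow> (('o list \<Rightarrow> nat \<Rightarrow> bool) \<Rightarrow> ('o list \<Rightarrow> nat \<Rightarrow> bool)) \<Rightarrow> bool" where
  "ips_map \<zeta> F \<longleftrightarrow> continuous_map (Dpow \<zeta>) (Dpow \<zeta>) F \<and>
     (\<forall>x\<in>extensional \<zeta>. \<forall>y\<in>extensional \<zeta>. \<forall>\<xi>\<in>Xi. \<xi> \<subseteq> \<zeta> \<longrightarrow>
        (restr (F x) \<xi> = restr (F y) \<xi> \<longleftrightarrow> restr x \<xi> = restr y \<xi>))"

lemma ips_mapI:
  assumes "continuous_map (Dpow \<zeta>) (Dpow \<zeta>) F"
    and "\<And>x y \<xi>. x \<in> extensional \<zeta> \<Longrightarrow> y \<in> extensional \<zeta> \<Longrightarrow> \<xi> \<in> Xi \<Longrightarrow> \<xi> \<subseteq> \<zeta> \<Longrightarrow>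
           restr (F x) \<xi> = restr (F y) \<xi> \<longleftrightarrow> restr x \<xi> = restr y \<xi>"
  shows "ips_map \<zeta> F"
  using assms by (simp add: ips_map_def)

lemma ips_map_continuous: "ips_map \<zeta> F \<Longrightarrow> continuous_map (Dpow \<zeta>) (Dpow \<zeta>) F"
  by (simp add: ips_map_def)

lemma ips_map_extensional: "ips_map \<zeta> F \<Longrightarrow> x \<in> extensional \<zeta> \<Longrightarrow> F x \<in> extensional \<zeta>"
  using continuous_map_image_subset_topspace[OF ips_map_continuous] by fastforce

lemma ips_map_restr_iff:
  assumes "ips_map \<zeta> F" "x \<in> extensional \<zeta>" "y \<in> extensional \<zeta>" "\<xi> \<in> Xi" "\<xi> \<subseteq> \<zeta>"
  shows "restr (F x) \<xi> = restr (F y) \<xi> \<longleftrightarrow> restr x \<xi> = restr y \<xi>"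
  using assms by (simp add: ips_map_def)

lemma continuous_map_ips_map_bit:
  assumes "ips_map \<zeta> H" "t \<in> \<zeta>"
  shows "continuous_map (Dpow \<zeta>) (discrete_topology UNIV) (\<lambda>p. H p t m)"
  using continuous_map_compose[OF ips_map_continuous[OF assms(1)] continuous_map_Dpow_bit[OF assms(2)]]
  by (simp add: o_def)

lemma ips_map_inj_on:
  assumes "ips_map \<zeta> F" "\<zeta> \<in> Xi"
  shows "inj_on F (extensional \<zeta>)"
proof (rule inj_onI)
  fix x y assume x: "x \<in> extensional \<zeta>" and y: "y \<in> extensional \<zeta>" and "F x = F y"
  then have "restr x \<zeta> = restr y \<zeta>"
    using ips_map_restr_iff[OF assms(1) x y assms(2) order_refl] by simp
  with x y show "x = y"
    by (auto intro: extensionalityI simp: restr_eq_iff)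
qed

lemma ips_map_compose:
  assumes "ips_map \<zeta> F" "ips_map \<zeta> G"
  shows "ips_map \<zeta> (F \<circ> G)"
proof (rule ips_mapI)
  show "continuous_map (Dpow \<zeta>) (Dpow \<zeta>) (F \<circ> G)"
    using assms by (metis continuous_map_compose ips_map_continuous)
qed (simp add: ips_map_restr_iff[OF assms(1)] ips_map_restr_iff[OF assms(2)]
               ips_map_extensional[OF assms(2)])

lemma IPS_iff_ips_map_image:
  assumes "\<zeta> \<in> Xi"
  shows "X \<in> IPS \<zeta> \<longleftrightarrow> (\<exists>H. ips_map \<zeta> H \<and> X = H ` extensional \<zeta>)"
proof
  assume "X \<in> IPS \<zeta>"
  then obtain H where X: "X \<subseteq> extensional \<zeta>"
    and hom: "homeomorphic_map (Dpow \<zeta>) (subtopology (Dpow \<zeta>) X) H"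
    and fibres: "\<forall>x0\<in>extensional \<zeta>. \<forall>x1\<in>extensional \<zeta>. \<forall>\<xi>\<in>Xi. \<xi> \<subseteq> \<zeta> \<longrightarrow>
           (restr x0 \<xi> = restr x1 \<xi> \<longleftrightarrow> restr (H x0) \<xi> = restr (H x1) \<xi>)"
    by (auto simp: IPS_def)
  have "ips_map \<zeta> H"
    using continuous_map_into_fulltopology[OF homeomorphic_imp_continuous_map[OF hom]] fibres
    by (simp add: ips_map_def)
  moreover have "X = H ` extensional \<zeta>"
    using homeomorphic_imp_surjective_map[OF hom] X by auto
  ultimately show "\<exists>H. ips_map \<zeta> H \<and> X = H ` extensional \<zeta>" by blast
next
  assume "\<exists>H. ips_map \<zeta> H \<and> X = H ` extensional \<zeta>"
  then obtain H where H: "ips_map \<zeta> H" and X: "X = H ` extensional \<zeta>" by blast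
  show "X \<in> IPS \<zeta>"
    unfolding IPS_def X
    using homeomorphic_map_onto_image_Dpow[OF ips_map_continuous[OF H] ips_map_inj_on[OF H assms]]
      ips_map_extensional[OF H] ips_map_restr_iff[OF H]
    by auto
qed

lemma clopen_in_ips_map_image:
  assumes "ips_map \<zeta> H" "\<zeta> \<in> Xi" "openin (Dpow \<zeta>) U" "closedin (Dpow \<zeta>) U"
  shows "clopen_in (H ` U) \<zeta> (H ` extensional \<zeta>)"
proof -
  have hom: "homeomorphic_map (Dpow \<zeta>) (subtopology (Dpow \<zeta>) (H ` extensional \<zeta>)) H"
    using assms(1,2) by (simp add: homeomorphic_map_onto_image_Dpow ips_map_continuous ips_map_inj_on)
  have "U \<subseteq> extensional \<zeta>"
    using openin_subset[OF assms(3)] by simp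
  then show ?thesis
    using homeomorphic_map_openness[OF hom] homeomorphic_map_closedness[OF hom] assms(3,4)
    by (simp add: clopen_in_def)
qed

lemma restr_set_ips_map_image_cong:
  assumes "ips_map \<zeta> H" "\<eta> \<in> Xi" "\<eta> \<subseteq> \<zeta>" "A \<subseteq> extensional \<zeta>" "B \<subseteq> extensional \<zeta>"
    and "restr_set A \<eta> = restr_set B \<eta>"
  shows "restr_set (H ` A) \<eta> = restr_set (H ` B) \<eta>"
proof -
  have "restr_set (H ` A) \<eta> \<subseteq> restr_set (H ` B) \<eta>"
    if AB: "A \<subseteq> extensional \<zeta>" "B \<subseteq> extensional \<zeta>" "restr_set A \<eta> \<subseteq> restr_set B \<eta>" for A B
  proof
    fix z assume "z \<in> restr_set (H ` A) \<eta>"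
    then obtain p where p: "p \<in> A" and z: "z = restr (H p) \<eta>"
      by (auto simp: restr_set_def)
    then obtain q where q: "q \<in> B" and "restr q \<eta> = restr p \<eta>"
      using AB(3) by (auto simp: restr_set_def)
    then have "restr (H q) \<eta> = z"
      using ips_map_restr_iff[OF assms(1) _ _ assms(2,3)] AB(1,2) p z by blast
    with q show "z \<in> restr_set (H ` B) \<eta>"
      by (auto simp: restr_set_def)
  qed
  with assms(4-6) show ?thesis
    by (simp add: subset_antisym)
qed

definition cylinder :: "'o list set \<Rightarrow> ('o list \<Rightarrow> nat \<Rightarrow> bool) \<Rightarrow> 'o list set \<Rightarrow> nat \<Rightarrow> ('o list \<Rightarrow> nat \<Rightarrow> bool) set" where
  "cylinder \<zeta> u S n = {p \<in> extensional \<zeta>. \<forall>t\<in>S. \<forall>m<n. p t m = u t m}"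

lemma cylinder_subset_extensional: "cylinder \<zeta> u S n \<subseteq> extensional \<zeta>"
  by (auto simp: cylinder_def)

lemma cylinder_mono: "S' \<subseteq> S \<Longrightarrow> n' \<le> n \<Longrightarrow> cylinder \<zeta> u S n \<subseteq> cylinder \<zeta> u S' n'"
  by (auto simp: cylinder_def)

definition prepend :: "nat \<Rightarrow> (nat \<Rightarrow> bool) \<Rightarrow> (nat \<Rightarrow> bool) \<Rightarrow> nat \<Rightarrow> bool" where
  "prepend n c f = (\<lambda>m. if m < n then c m else f (m - n))"

lemma prepend_eq_iff [simp]: "prepend n c f = prepend n c g \<longleftrightarrow> f = g"
proof
  assume "prepend n c f = prepend n c g"
  then have "prepend n c f (m + n) = prepend n c g (m + n)" for m
    by simp
  then show "f = g"
    by (simp add: prepend_def fun_eq_iff)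
qed simp

definition cylinder_map :: "'o list set \<Rightarrow> ('o list \<Rightarrow> nat \<Rightarrow> bool) \<Rightarrow> 'o list set \<Rightarrow> nat \<Rightarrow>
    ('o list \<Rightarrow> nat \<Rightarrow> bool) \<Rightarrow> ('o list \<Rightarrow> nat \<Rightarrow> bool)" where
  "cylinder_map \<zeta> u S n p = restrict (\<lambda>t. if t \<in> S then prepend n (u t) (p t) else p t) \<zeta>"

lemma ips_map_cylinder_map: "ips_map \<zeta> (cylinder_map \<zeta> u S n)"
proof (rule ips_mapI)
  show "continuous_map (Dpow \<zeta>) (Dpow \<zeta>) (cylinder_map \<zeta> u S n)"
  proof (rule continuous_map_into_Dpow)
    fix t m assume t: "t \<in> \<zeta>"
    show "continuous_map (Dpow \<zeta>) (discrete_topology UNIV) (\<lambda>p. cylinder_map \<zeta> u S n p t m)"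
    proof (cases "t \<in> S \<and> m < n")
      case True
      then show ?thesis
        using t by (simp add: cylinder_map_def prepend_def)
    next
      case False
      then have "(\<lambda>p. cylinder_map \<zeta> u S n p t m) = (\<lambda>p. p t (if t \<in> S then m - n else m))"
        using t by (auto simp: cylinder_map_def prepend_def)
      then show ?thesis
        using continuous_map_Dpow_bit[OF t] by simp
    qed
  qed (simp add: cylinder_map_def)
next
  fix x y \<xi> assume "\<xi> \<subseteq> \<zeta>"
  then show "restr (cylinder_map \<zeta> u S n x) \<xi> = restr (cylinder_map \<zeta> u S n y) \<xi> \<longleftrightarrow>
      restr x \<xi> = restr y \<xi>"
    by (auto simp: restr_eq_iff cylinder_map_def)
qed

lemma cylinder_map_image:
  assumes "S \<subseteq> \<zeta>"
  shows "cylinder_map \<zeta> u S n ` extensional \<zeta> = cylinder \<zeta> u S n"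
proof
  show "cylinder_map \<zeta> u S n ` extensional \<zeta> \<subseteq> cylinder \<zeta> u S n"
    using assms unfolding cylinder_def cylinder_map_def prepend_def by auto
  show "cylinder \<zeta> u S n \<subseteq> cylinder_map \<zeta> u S n ` extensional \<zeta>"
  proof
    fix q assume q: "q \<in> cylinder \<zeta> u S n"
    define p where "p = restrict (\<lambda>t. if t \<in> S then (\<lambda>m. q t (m + n)) else q t) \<zeta>"
    have prepended: "prepend n (u t) (\<lambda>m. q t (m + n)) = q t" if "t \<in> S" for t
      using q that by (auto simp: prepend_def cylinder_def)
    have "cylinder_map \<zeta> u S n p = q"
    proof (rule extensionalityI)
      show "cylinder_map \<zeta> u S n p \<in> extensional \<zeta>" "q \<in> extensional \<zeta>"
        using q by (simp_all add: cylinder_map_def cylinder_def)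
    qed (simp add: cylinder_map_def p_def prepended)
    moreover have "p \<in> extensional \<zeta>"
      by (simp add: p_def)
    ultimately show "q \<in> cylinder_map \<zeta> u S n ` extensional \<zeta>"
      by blast
  qed
qed

lemma closedin_cylinder:
  assumes "S \<subseteq> \<zeta>"
  shows "closedin (Dpow \<zeta>) (cylinder \<zeta> u S n)"
proof -
  have "compactin (Dpow \<zeta>) (cylinder_map \<zeta> u S n ` topspace (Dpow \<zeta>))"
    using compact_space_Dpow[unfolded compact_space_def] ips_map_continuous[OF ips_map_cylinder_map]
    by (rule image_compactin)
  then show ?thesis
    using cylinder_map_image[OF assms] compactin_imp_closedin[OF Hausdorff_space_Dpow] by simp
qed

lemma openin_cylinder:
  assumes "finite S" "S \<subseteq> \<zeta>"
  shows "openin (Dpow \<zeta>) (cylinder \<zeta> u S n)"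
proof -
  let ?bit = "\<lambda>(t, m). {p \<in> topspace (Dpow \<zeta>). p t m \<in> {u t m}}"
  have "cylinder \<zeta> u S n = topspace (Dpow \<zeta>) \<inter> \<Inter> (?bit ` (S \<times> {..<n}))"
    by (auto simp: cylinder_def)
  moreover have "openin (Dpow \<zeta>) (?bit (t, m))" if "t \<in> S" for t m
    using openin_continuous_map_preimage[OF continuous_map_Dpow_bit, of t \<zeta> "{u t m}" m] that assms(2)
    by auto
  ultimately show ?thesis
    using assms(1) openin_topspace[of "Dpow \<zeta>"] by (auto intro!: openin_Int_Inter)
qed

lemma IPS_ips_map_image_cylinder:
  assumes "ips_map \<zeta> H" "\<zeta> \<in> Xi" "S \<subseteq> \<zeta>"
  shows "H ` cylinder \<zeta> u S n \<in> IPS \<zeta>"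
proof -
  have "H ` cylinder \<zeta> u S n = (H \<circ> cylinder_map \<zeta> u S n) ` extensional \<zeta>"
    by (metis cylinder_map_image[OF assms(3)] image_comp)
  moreover have "ips_map \<zeta> (H \<circ> cylinder_map \<zeta> u S n)"
    using assms(1) ips_map_cylinder_map by (rule ips_map_compose)
  ultimately show ?thesis
    using IPS_iff_ips_map_image[OF assms(2)] by blast
qed

lemma clopen_in_ips_map_image_cylinder:
  assumes "ips_map \<zeta> H" "\<zeta> \<in> Xi" "finite S" "S \<subseteq> \<zeta>"
  shows "clopen_in (H ` cylinder \<zeta> u S n) \<zeta> (H ` extensional \<zeta>)"
  using assms by (simp add: clopen_in_ips_map_image openin_cylinder closedin_cylinder)

lemma restr_set_cylinder_cong:
  assumes "restr u \<eta> = restr w \<eta>" "\<eta> \<subseteq> \<zeta>" "S \<subseteq> \<zeta>"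
  shows "restr_set (cylinder \<zeta> u S n) \<eta> = restr_set (cylinder \<zeta> w S n) \<eta>"
proof -
  have "restr p \<eta> \<in> restr_set (cylinder \<zeta> b S n) \<eta>"
    if "restr a \<eta> = restr b \<eta>" "p \<in> cylinder \<zeta> a S n" for a b p
  proof -
    define q where "q = restrict (\<lambda>t. if t \<in> \<eta> then p t else b t) \<zeta>"
    have "q \<in> cylinder \<zeta> b S n"
      using that assms(3) by (auto simp: q_def cylinder_def restr_eq_iff)
    moreover have "restr q \<eta> = restr p \<eta>"
      using assms(2) by (auto simp: q_def restr_eq_iff)
    ultimately show ?thesis
      unfolding restr_set_def by (metis image_eqI)
  qed
  from this[OF assms(1)] this[OF assms(1)[symmetric]] show ?thesis
    by (auto simp: restr_set_def)
qed

lemma restr_set_cylinder_images: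
  assumes "ips_map \<zeta> H" "\<eta> \<in> Xi" "\<eta> \<subseteq> \<zeta>" "S \<subseteq> \<zeta>" "restr u \<eta> = restr w \<eta>"
    and "\<And>p. p \<in> extensional \<zeta> \<Longrightarrow> restr (F p) \<eta> = restr (H p) \<eta>"
  shows "restr_set (H ` cylinder \<zeta> u S n) \<eta> = restr_set (F ` cylinder \<zeta> w S n) \<eta>"
proof -
  have "restr_set (H ` cylinder \<zeta> u S n) \<eta> = restr_set (H ` cylinder \<zeta> w S n) \<eta>"
    using cylinder_subset_extensional cylinder_subset_extensional restr_set_cylinder_cong[OF assms(5,3,4)]
    by (rule restr_set_ips_map_image_cong[OF assms(1-3)])
  also have "\<dots> = restr_set (F ` cylinder \<zeta> w S n) \<eta>"
    using assms(6) by (auto simp: restr_set_def cylinder_def image_image intro!: image_cong)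
  finally show ?thesis .
qed

lemma openin_D_top_contains_initial_segment_nbhd:
  assumes "openin D_top V" "c \<in> V"
  shows "\<exists>k. {f. \<forall>m<k. f m = c m} \<subseteq> V"
proof -
  obtain W where fin: "finite {m \<in> UNIV. W m \<noteq> topspace (discrete_topology (UNIV :: bool set))}"
    and c: "c \<in> Pi\<^sub>E UNIV W" and WV: "Pi\<^sub>E UNIV W \<subseteq> V"
    using assms(1)[unfolded D_top_def openin_product_topology_alt, rule_format, OF assms(2)[unfolded D_top_def]]
    by blast
  from fin obtain k where k: "\<And>m. W m \<noteq> UNIV \<Longrightarrow> m < k"
    unfolding finite_nat_set_iff_bounded by auto
  have "f m \<in> W m" if "\<forall>m<k. f m = c m" for f m
  proof (cases "W m = UNIV")
    case False
    then show ?thesis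
      using that c k by (simp add: PiE_iff)
  qed simp
  then have "{f. \<forall>m<k. f m = c m} \<subseteq> Pi\<^sub>E UNIV W"
    by (simp add: subset_iff PiE_iff)
  with WV show ?thesis
    by blast
qed

lemma openin_Dpow_contains_cylinder:
  assumes "openin (Dpow \<zeta>) N" "u \<in> N"
  obtains S n where "finite S" "S \<subseteq> \<zeta>" "cylinder \<zeta> u S n \<subseteq> N"
proof -
  obtain U where fin: "finite {t \<in> \<zeta>. U t \<noteq> topspace D_top}" and U: "\<forall>t\<in>\<zeta>. openin D_top (U t)"
    and u: "u \<in> Pi\<^sub>E \<zeta> U" and UN: "Pi\<^sub>E \<zeta> U \<subseteq> N"
    using assms(1)[unfolded Dpow_def openin_product_topology_alt, rule_format, OF assms(2)] by blast
  define S where "S = {t \<in> \<zeta>. U t \<noteq> UNIV}"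
  have "finite S" "S \<subseteq> \<zeta>"
    using fin by (auto simp: S_def topspace_D_top)
  have "\<forall>t\<in>S. \<exists>k. {f. \<forall>m<k. f m = u t m} \<subseteq> U t"
  proof
    fix t assume "t \<in> S"
    then have "openin D_top (U t)" "u t \<in> U t"
      using U u by (auto simp: S_def PiE_iff)
    then show "\<exists>k. {f. \<forall>m<k. f m = u t m} \<subseteq> U t"
      by (rule openin_D_top_contains_initial_segment_nbhd)
  qed
  then obtain k where k: "\<forall>t\<in>S. {f. \<forall>m<k t. f m = u t m} \<subseteq> U t"
    by (rule bchoice[THEN exE])
  obtain n where n: "\<forall>t\<in>S. k t \<le> n"
    using \<open>finite S\<close> finite_nat_set_iff_bounded_le[of "k ` S"] by auto
  have "cylinder \<zeta> u S n \<subseteq> Pi\<^sub>E \<zeta> U"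
  proof
    fix p assume p: "p \<in> cylinder \<zeta> u S n"
    have "p t \<in> U t" if "t \<in> \<zeta>" for t
    proof (cases "t \<in> S")
      case True
      then have "\<forall>m<k t. p t m = u t m"
        using p n by (auto simp: cylinder_def)
      with True k show ?thesis
        by blast
    next
      case False
      then show ?thesis
        using that by (simp add: S_def)
    qed
    with p show "p \<in> Pi\<^sub>E \<zeta> U"
      by (simp add: PiE_iff cylinder_def)
  qed
  with UN have "cylinder \<zeta> u S n \<subseteq> N"
    by blast
  with \<open>finite S\<close> \<open>S \<subseteq> \<zeta>\<close> show thesis
    by (rule that)
qed

lemma locally_constant_on_cylinder:
  assumes "continuous_map (Dpow \<zeta>) (discrete_topology UNIV) f" "u \<in> extensional \<zeta>"
  obtains S n where "finite S" "S \<subseteq> \<zeta>" "\<And>p. p \<in> cylinder \<zeta> u S n \<Longrightarrow> f p = f u"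
proof -
  have "openin (Dpow \<zeta>) {p \<in> topspace (Dpow \<zeta>). f p \<in> {f u}}"
    using assms(1) by (rule openin_continuous_map_preimage) simp
  with assms(2) obtain S n where "finite S" "S \<subseteq> \<zeta>"
    "cylinder \<zeta> u S n \<subseteq> {p \<in> topspace (Dpow \<zeta>). f p \<in> {f u}}"
    by (auto elim: openin_Dpow_contains_cylinder)
  with that show thesis
    by blast
qed

lemma locally_constant_on_cylinders:
  assumes "continuous_map (Dpow \<zeta>) (discrete_topology UNIV) f" "u \<in> extensional \<zeta>"
    and "continuous_map (Dpow \<zeta>) (discrete_topology UNIV) g" "w \<in> extensional \<zeta>"
  obtains S n where "finite S" "S \<subseteq> \<zeta>"
    "\<And>p. p \<in> cylinder \<zeta> u S n \<Longrightarrow> f p = f u" "\<And>p. p \<in> cylinder \<zeta> w S n \<Longrightarrow> g p = g w"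
proof -
  obtain S1 n1 where S1: "finite S1" "S1 \<subseteq> \<zeta>" "\<And>p. p \<in> cylinder \<zeta> u S1 n1 \<Longrightarrow> f p = f u"
    using locally_constant_on_cylinder[OF assms(1,2)] by blast
  obtain S2 n2 where S2: "finite S2" "S2 \<subseteq> \<zeta>" "\<And>p. p \<in> cylinder \<zeta> w S2 n2 \<Longrightarrow> g p = g w"
    using locally_constant_on_cylinder[OF assms(3,4)] by blast
  show thesis
  proof (rule that[of "S1 \<union> S2" "max n1 n2"])
    show "finite (S1 \<union> S2)" "S1 \<union> S2 \<subseteq> \<zeta>"
      using S1 S2 by auto
    show "f p = f u" if "p \<in> cylinder \<zeta> u (S1 \<union> S2) (max n1 n2)" for p
      using S1(3) that cylinder_mono[of S1 "S1 \<union> S2" n1 "max n1 n2" \<zeta> u] by auto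
    show "g p = g w" if "p \<in> cylinder \<zeta> w (S1 \<union> S2) (max n1 n2)" for p
      using S2(3) that cylinder_mono[of S2 "S1 \<union> S2" n2 "max n1 n2" \<zeta> w] by auto
  qed
qed

lemma Xi_Un: "\<xi> \<in> Xi \<Longrightarrow> \<eta> \<in> Xi \<Longrightarrow> \<xi> \<union> \<eta> \<in> Xi"
  unfolding Xi_def by auto

lemma Xi_Int: "\<xi> \<in> Xi \<Longrightarrow> \<eta> \<in> Xi \<Longrightarrow> \<xi> \<inter> \<eta> \<in> Xi"
  unfolding Xi_def by auto

definition proper_prefixes :: "'o list \<Rightarrow> 'o list set" where
  "proper_prefixes i = {s \<in> T_set. strict_ext s i}"

lemma proper_prefixes_not_refl: "i \<notin> proper_prefixes i"
  by (simp add: proper_prefixes_def strict_ext_def)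

lemma strict_ext_trans: "strict_ext s t \<Longrightarrow> strict_ext t u \<Longrightarrow> strict_ext s u"
  unfolding strict_ext_def by force

lemma finite_proper_prefixes: "finite (proper_prefixes i)"
proof (rule finite_subset)
  show "proper_prefixes i \<subseteq> (\<lambda>k. take k i) ` {..length i}"
  proof
    fix s assume "s \<in> proper_prefixes i"
    then obtain v where "i = s @ v"
      by (auto simp: proper_prefixes_def strict_ext_def)
    then show "s \<in> (\<lambda>k. take k i) ` {..length i}"
      by (intro image_eqI[of _ _ "length s"]) auto
  qed
qed simp

lemma proper_prefixes_in_Xi: "proper_prefixes i \<in> Xi"
  using countable_finite[OF finite_proper_prefixes] strict_ext_trans
  by (auto simp: Xi_def proper_prefixes_def)

lemma insert_proper_prefixes_in_Xi:
  assumes "i \<in> T_set"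
  shows "insert i (proper_prefixes i) \<in> Xi"
  using assms countable_finite[OF finite_proper_prefixes] strict_ext_trans
  by (auto simp: Xi_def proper_prefixes_def)

lemma proper_prefixes_subset: "\<zeta> \<in> Xi \<Longrightarrow> i \<in> \<zeta> \<Longrightarrow> proper_prefixes i \<subseteq> \<zeta>"
  by (auto simp: Xi_def proper_prefixes_def)

lemma ips_map_varies_on_fibre:
  assumes "ips_map \<zeta> F" "\<zeta> \<in> Xi" "\<eta> \<in> Xi" "\<eta> \<subseteq> \<zeta>" "i \<in> \<zeta> - \<eta>" "u \<in> extensional \<zeta>"
  obtains w where "w \<in> extensional \<zeta>" "restr w \<eta> = restr u \<eta>" "F w i \<noteq> c"
proof -
  define v where "v = u(i := (\<lambda>m. \<not> u i m))"
  define \<xi> where "\<xi> = \<eta> \<union> proper_prefixes i"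
  have i: "i \<in> \<zeta>" "i \<notin> \<eta>" "i \<in> T_set"
    using assms(2,5) by (auto simp: Xi_def)
  have \<xi>: "\<xi> \<in> Xi" "\<xi> \<subseteq> \<zeta>" "i \<notin> \<xi>"
    using assms(2-4) i
    by (auto simp: \<xi>_def Xi_Un proper_prefixes_in_Xi proper_prefixes_subset proper_prefixes_not_refl)
  have \<xi>i: "insert i \<xi> \<in> Xi" "insert i \<xi> \<subseteq> \<zeta>"
    using Xi_Un[OF assms(3) insert_proper_prefixes_in_Xi[OF i(3)]] \<xi>(2) i(1) by (simp_all add: \<xi>_def)
  have v: "v \<in> extensional \<zeta>"
    using assms(6) i(1) by (simp add: v_def extensional_def)
  have "restr (F v) \<xi> = restr (F u) \<xi>"
    using ips_map_restr_iff[OF assms(1) v assms(6) \<xi>(1,2)] \<xi>(3) by (auto simp: restr_eq_iff v_def)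
  moreover have "restr v (insert i \<xi>) \<noteq> restr u (insert i \<xi>)"
    unfolding restr_eq_iff v_def by (auto simp: fun_eq_iff)
  then have "restr (F v) (insert i \<xi>) \<noteq> restr (F u) (insert i \<xi>)"
    using ips_map_restr_iff[OF assms(1) v assms(6) \<xi>i] by simp
  ultimately have "F v i \<noteq> F u i"
    by (auto simp: restr_eq_iff)
  moreover have "restr v \<eta> = restr u \<eta>"
    using i(2) by (auto simp: restr_eq_iff v_def)
  ultimately show thesis
    using that v assms(6) by metis
qed

definition graft :: "'o list set \<Rightarrow> 'o list set \<Rightarrow> (('o list \<Rightarrow> nat \<Rightarrow> bool) \<Rightarrow> ('o list \<Rightarrow> nat \<Rightarrow> bool)) \<Rightarrow>
    ('o list \<Rightarrow> nat \<Rightarrow> bool) \<Rightarrow> ('o list \<Rightarrow> nat \<Rightarrow> bool)" where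
  "graft \<zeta> \<eta> H u = restrict (\<lambda>t. if t \<in> \<eta> then H u t else u t) \<zeta>"

lemma continuous_map_graft:
  assumes "ips_map \<zeta> H"
  shows "continuous_map (Dpow \<zeta>) (Dpow \<zeta>) (graft \<zeta> \<eta> H)"
proof (rule continuous_map_into_Dpow)
  fix t m assume t: "t \<in> \<zeta>"
  then show "continuous_map (Dpow \<zeta>) (discrete_topology UNIV) (\<lambda>u. graft \<zeta> \<eta> H u t m)"
    using continuous_map_ips_map_bit[OF assms t] continuous_map_Dpow_bit[OF t]
    by (cases "t \<in> \<eta>") (simp_all add: graft_def)
qed (simp add: graft_def)

lemma inj_on_graft:
  assumes "ips_map \<zeta> H" "\<eta> \<in> Xi" "\<eta> \<subseteq> \<zeta>"
  shows "inj_on (graft \<zeta> \<eta> H) (extensional \<zeta>)"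
proof (rule inj_onI)
  fix x y assume x: "x \<in> extensional \<zeta>" and y: "y \<in> extensional \<zeta>"
    and same: "graft \<zeta> \<eta> H x = graft \<zeta> \<eta> H y"
  have eq: "(if t \<in> \<eta> then H x t else x t) = (if t \<in> \<eta> then H y t else y t)" if "t \<in> \<zeta>" for t
    using fun_cong[OF same, of t] that by (simp add: graft_def)
  then have "restr (H x) \<eta> = restr (H y) \<eta>"
    unfolding restr_eq_iff using assms(3) by (metis subsetD)
  then have "restr x \<eta> = restr y \<eta>"
    using ips_map_restr_iff[OF assms(1) x y assms(2,3)] by simp
  show "x = y"
  proof (rule extensionalityI[OF x y])
    fix t assume "t \<in> \<zeta>"
    then show "x t = y t"
      using eq[of t] \<open>restr x \<eta> = restr y \<eta>\<close> by (cases "t \<in> \<eta>") (auto simp: restr_eq_iff)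
  qed
qed

lemma graft_image:
  assumes "ips_map \<zeta> H" "\<eta> \<in> Xi" "\<eta> \<subseteq> \<zeta>"
  shows "graft \<zeta> \<eta> H ` extensional \<zeta> = {z \<in> extensional \<zeta>. restr z \<eta> \<in> restr_set (H ` extensional \<zeta>) \<eta>}"
proof (intro equalityI subsetI)
  fix z assume "z \<in> graft \<zeta> \<eta> H ` extensional \<zeta>"
  then obtain u where u: "u \<in> extensional \<zeta>" and z: "z = graft \<zeta> \<eta> H u"
    by blast
  have "restr z \<eta> = restr (H u) \<eta>"
    using assms(3) by (auto simp: z graft_def restr_eq_iff)
  with u show "z \<in> {z \<in> extensional \<zeta>. restr z \<eta> \<in> restr_set (H ` extensional \<zeta>) \<eta>}"
    by (auto simp: z graft_def restr_set_def)
next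
  fix z assume "z \<in> {z \<in> extensional \<zeta>. restr z \<eta> \<in> restr_set (H ` extensional \<zeta>) \<eta>}"
  then obtain p where z: "z \<in> extensional \<zeta>" and p: "p \<in> extensional \<zeta>" and zp: "restr z \<eta> = restr (H p) \<eta>"
    by (auto simp: restr_set_def)
  define u where "u = restrict (\<lambda>t. if t \<in> \<eta> then p t else z t) \<zeta>"
  have u: "u \<in> extensional \<zeta>"
    by (simp add: u_def)
  have "restr u \<eta> = restr p \<eta>"
    using assms(3) by (auto simp: u_def restr_eq_iff)
  then have "restr (H u) \<eta> = restr z \<eta>"
    using ips_map_restr_iff[OF assms(1) u p assms(2,3)] zp by simp
  then have "graft \<zeta> \<eta> H u = z"
    using z by (intro extensionalityI[of _ \<zeta>]) (auto simp: graft_def u_def restr_eq_iff)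
  with u show "z \<in> graft \<zeta> \<eta> H ` extensional \<zeta>"
    by blast
qed

lemma ips_map_comp_transport:
  fixes \<eta> :: "'o list set"
  assumes "\<eta> \<in> Xi" "ips_map \<zeta> HX" "ips_map \<zeta> HY" "continuous_map (Dpow \<zeta>) (Dpow \<zeta>) G"
    and off: "\<And>u t. u \<in> extensional \<zeta> \<Longrightarrow> t \<in> \<zeta> - \<eta> \<Longrightarrow> G u t = u t"
    and on: "\<And>u. u \<in> extensional \<zeta> \<Longrightarrow> restr (HY (G u)) \<eta> = restr (HX u) \<eta>"
  shows "ips_map \<zeta> (HY \<circ> G)"
proof (rule ips_mapI)
  show "continuous_map (Dpow \<zeta>) (Dpow \<zeta>) (HY \<circ> G)"
    using assms(4) ips_map_continuous[OF assms(3)] by (rule continuous_map_compose)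
  fix x y :: "'o list \<Rightarrow> nat \<Rightarrow> bool" and \<xi>
  assume x: "x \<in> extensional \<zeta>" and y: "y \<in> extensional \<zeta>" and \<xi>: "\<xi> \<in> Xi" "\<xi> \<subseteq> \<zeta>"
  have G: "G x \<in> extensional \<zeta>" "G y \<in> extensional \<zeta>"
    using continuous_map_image_subset_topspace[OF assms(4)] x y by auto
  have \<xi>\<eta>: "\<xi> \<inter> \<eta> \<in> Xi" "\<xi> \<inter> \<eta> \<subseteq> \<zeta>"
    using Xi_Int[OF \<xi>(1) assms(1)] \<xi>(2) by auto
  have split: "restr a \<xi> = restr b \<xi> \<longleftrightarrow> restr a (\<xi> \<inter> \<eta>) = restr b (\<xi> \<inter> \<eta>) \<and> (\<forall>t\<in>\<xi> - \<eta>. a t = b t)"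
    for a b :: "'o list \<Rightarrow> nat \<Rightarrow> bool"
    by (auto simp: restr_eq_iff)
  have "restr (HY (G x)) \<xi> = restr (HY (G y)) \<xi> \<longleftrightarrow> restr (G x) \<xi> = restr (G y) \<xi>"
    by (rule ips_map_restr_iff[OF assms(3) G \<xi>])
  also have "\<dots> \<longleftrightarrow> restr (HY (G x)) (\<xi> \<inter> \<eta>) = restr (HY (G y)) (\<xi> \<inter> \<eta>) \<and> (\<forall>t\<in>\<xi> - \<eta>. G x t = G y t)"
    using split ips_map_restr_iff[OF assms(3) G \<xi>\<eta>] by simp
  also have "\<dots> \<longleftrightarrow> restr (HX x) (\<xi> \<inter> \<eta>) = restr (HX y) (\<xi> \<inter> \<eta>) \<and> (\<forall>t\<in>\<xi> - \<eta>. x t = y t)"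
  proof -
    have "HY (G x) t = HX x t" "HY (G y) t = HX y t" if "t \<in> \<eta>" for t
      using on[OF x] on[OF y] that unfolding restr_eq_iff by simp_all
    then have "restr (HY (G x)) (\<xi> \<inter> \<eta>) = restr (HY (G y)) (\<xi> \<inter> \<eta>) \<longleftrightarrow>
        restr (HX x) (\<xi> \<inter> \<eta>) = restr (HX y) (\<xi> \<inter> \<eta>)"
      unfolding restr_eq_iff by simp
    moreover have "G x t = x t" "G y t = y t" if "t \<in> \<xi> - \<eta>" for t
      using off[OF x] off[OF y] that \<xi>(2) by auto
    then have "(\<forall>t\<in>\<xi> - \<eta>. G x t = G y t) \<longleftrightarrow> (\<forall>t\<in>\<xi> - \<eta>. x t = y t)"
      by simp
    ultimately show ?thesis
      by simp
  qed
  also have "\<dots> \<longleftrightarrow> restr x \<xi> = restr y \<xi>"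
    using split ips_map_restr_iff[OF assms(2) x y \<xi>\<eta>] by simp
  finally show "restr ((HY \<circ> G) x) \<xi> = restr ((HY \<circ> G) y) \<xi> \<longleftrightarrow> restr x \<xi> = restr y \<xi>"
    by simp
qed

lemma ips_map_align:
  assumes "\<zeta> \<in> Xi" "\<eta> \<in> Xi" "\<eta> \<subseteq> \<zeta>" "ips_map \<zeta> HX" "ips_map \<zeta> HY"
    and "restr_set (HX ` extensional \<zeta>) \<eta> = restr_set (HY ` extensional \<zeta>) \<eta>"
  obtains F where "ips_map \<zeta> F" "F ` extensional \<zeta> = HY ` extensional \<zeta>"
    "\<And>u. u \<in> extensional \<zeta> \<Longrightarrow> restr (F u) \<eta> = restr (HX u) \<eta>"
proof -
  let ?W = "graft \<zeta> \<eta> HY ` extensional \<zeta>"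
  have W: "graft \<zeta> \<eta> HX ` extensional \<zeta> = ?W"
    using graft_image[OF assms(4,2,3)] graft_image[OF assms(5,2,3)] assms(6) by simp
  have homX: "homeomorphic_map (Dpow \<zeta>) (subtopology (Dpow \<zeta>) ?W) (graft \<zeta> \<eta> HX)"
    using homeomorphic_map_onto_image_Dpow[OF continuous_map_graft[OF assms(4)] inj_on_graft[OF assms(4,2,3)]]
    by (simp only: W)
  have "homeomorphic_map (Dpow \<zeta>) (subtopology (Dpow \<zeta>) ?W) (graft \<zeta> \<eta> HY)"
    using continuous_map_graft[OF assms(5)] inj_on_graft[OF assms(5,2,3)]
    by (rule homeomorphic_map_onto_image_Dpow)
  then obtain g where "homeomorphic_maps (Dpow \<zeta>) (subtopology (Dpow \<zeta>) ?W) (graft \<zeta> \<eta> HY) g"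
    unfolding homeomorphic_map_maps by blast
  then have homg: "homeomorphic_map (subtopology (Dpow \<zeta>) ?W) (Dpow \<zeta>) g"
    and inv: "\<forall>z\<in>topspace (subtopology (Dpow \<zeta>) ?W). graft \<zeta> \<eta> HY (g z) = z"
    unfolding homeomorphic_maps_map by blast+
  define G where "G = g \<circ> graft \<zeta> \<eta> HX"
  have homG: "homeomorphic_map (Dpow \<zeta>) (Dpow \<zeta>) G"
    unfolding G_def using homX homg by (rule homeomorphic_map_compose)
  have grafted: "graft \<zeta> \<eta> HY (G u) = graft \<zeta> \<eta> HX u" if "u \<in> extensional \<zeta>" for u
  proof -
    have "graft \<zeta> \<eta> HX u \<in> topspace (subtopology (Dpow \<zeta>) ?W)"
      using W that continuous_map_image_subset_topspace[OF continuous_map_graft[OF assms(4)]] by auto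
    with inv show ?thesis
      by (simp add: G_def)
  qed
  have off: "G u t = u t" if "u \<in> extensional \<zeta>" "t \<in> \<zeta> - \<eta>" for u t
    using fun_cong[OF grafted[OF that(1)], of t] that(2) by (simp add: graft_def)
  have on: "HY (G u) t = HX u t" if "u \<in> extensional \<zeta>" "t \<in> \<eta>" for u t
    using fun_cong[OF grafted[OF that(1)], of t] that(2) assms(3) by (auto simp: graft_def)
  have "ips_map \<zeta> (HY \<circ> G)"
    using assms(2,4,5) homeomorphic_imp_continuous_map[OF homG] off
    by (rule ips_map_comp_transport) (simp_all add: restr_eq_iff on)
  moreover have "(HY \<circ> G) ` extensional \<zeta> = HY ` extensional \<zeta>"
    using homeomorphic_imp_surjective_map[OF homG] by (metis image_comp topspace_Dpow)
  moreover have "restr ((HY \<circ> G) u) \<eta> = restr (HX u) \<eta>" if "u \<in> extensional \<zeta>" for u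
    using on[OF that] by (simp add: restr_eq_iff)
  ultimately show thesis
    by (rule that)
qed

theorem lemma2p21:
  fixes \<zeta> \<eta> :: "('o::wellorder) list set"
    and X Y :: "('o list \<Rightarrow> nat \<Rightarrow> bool) set"
    and i :: "'o list"
  assumes omega1: "\<not> countable (UNIV :: 'o set)" "\<forall>a::'o. countable {b. b < a}"
    and "\<zeta> \<in> Xi" "\<eta> \<in> Xi" "\<eta> \<subseteq> \<zeta>"
    and "X \<in> IPS \<zeta>" "Y \<in> IPS \<zeta>"
    and "restr_set X \<eta> = restr_set Y \<eta>"
    and "i \<in> \<zeta> - \<eta>"
  shows "\<exists>(k::nat) X' Y'. X' \<in> IPS \<zeta> \<and> Y' \<in> IPS \<zeta> \<and> X' \<subseteq> X \<and> Y' \<subseteq> Y \<and>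
           clopen_in X' \<zeta> X \<and> clopen_in Y' \<zeta> Y \<and>
           restr_set X' \<eta> = restr_set Y' \<eta> \<and>
           ((\<forall>x\<in>X'. \<forall>y\<in>Y'. x i k = False \<and> y i k = True) \<or>
            (\<forall>x\<in>X'. \<forall>y\<in>Y'. x i k = True \<and> y i k = False))"
proof -
  note \<zeta> = assms(3) and \<eta> = assms(4,5) and i = assms(9)
  obtain HX where HX: "ips_map \<zeta> HX" "X = HX ` extensional \<zeta>"
    using assms(6) IPS_iff_ips_map_image[OF \<zeta>] by blast
  obtain HY where HY: "ips_map \<zeta> HY" "Y = HY ` extensional \<zeta>"
    using assms(7) IPS_iff_ips_map_image[OF \<zeta>] by blast
  obtain F where F: "ips_map \<zeta> F" "Y = F ` extensional \<zeta>"
    and FX: "\<And>u. u \<in> extensional \<zeta> \<Longrightarrow> restr (F u) \<eta> = restr (HX u) \<eta>"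
    using ips_map_align[OF \<zeta> \<eta> HX(1) HY(1) assms(8)[unfolded HX(2) HY(2)]] HY(2) by metis
  define u :: "'o list \<Rightarrow> nat \<Rightarrow> bool" where "u = restrict (\<lambda>_ _. False) \<zeta>"
  have u: "u \<in> extensional \<zeta>"
    by (simp add: u_def)
  obtain w where w: "w \<in> extensional \<zeta>" "restr w \<eta> = restr u \<eta>" and "F w i \<noteq> HX u i"
    using ips_map_varies_on_fibre[OF F(1) \<zeta> \<eta> i u] by blast
  then obtain k where k: "F w i k \<noteq> HX u i k"
    by (auto simp: fun_eq_iff)
  have "i \<in> \<zeta>"
    using i by blast
  obtain S n where S: "finite S" "S \<subseteq> \<zeta>"
    and constX: "\<And>p. p \<in> cylinder \<zeta> u S n \<Longrightarrow> HX p i k = HX u i k"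
    and constY: "\<And>p. p \<in> cylinder \<zeta> w S n \<Longrightarrow> F p i k = F w i k"
    using locally_constant_on_cylinders[OF continuous_map_ips_map_bit[OF HX(1) \<open>i \<in> \<zeta>\<close>, where m = k] u
          continuous_map_ips_map_bit[OF F(1) \<open>i \<in> \<zeta>\<close>, where m = k] w(1)]
    by blast
  let ?X' = "HX ` cylinder \<zeta> u S n" and ?Y' = "F ` cylinder \<zeta> w S n"
  have "restr_set ?X' \<eta> = restr_set ?Y' \<eta>"
    using restr_set_cylinder_images[OF HX(1) \<eta> S(2) w(2)[symmetric] FX] .
  moreover have "(\<forall>x\<in>?X'. \<forall>y\<in>?Y'. x i k = False \<and> y i k = True) \<or>
      (\<forall>x\<in>?X'. \<forall>y\<in>?Y'. x i k = True \<and> y i k = False)"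
    using constX constY k by (cases "HX u i k") auto
  moreover have "?X' \<in> IPS \<zeta>" "?Y' \<in> IPS \<zeta>"
    using HX(1) F(1) \<zeta> S(2) by (simp_all add: IPS_ips_map_image_cylinder)
  moreover have "clopen_in ?X' \<zeta> X" "clopen_in ?Y' \<zeta> Y"
    unfolding HX(2) F(2) using HX(1) F(1) \<zeta> S by (simp_all add: clopen_in_ips_map_image_cylinder)
  moreover have "?X' \<subseteq> X" "?Y' \<subseteq> Y"
    using HX(2) F(2) cylinder_subset_extensional by blast+
  ultimately show ?thesis
    by blast
qed

end
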